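(* Let $k,N\ge0$ and $g\in\mathcal M(k)$. The quadratic form $h\mapsto Q_{A,2}(gh)$ on $V_N$ has polar rank at least $\max\{0,N-k-m+1\}$. Consequently, with $n=k+N$ and any non-trivial additive character $\psi$, \[ \Bigl|\sum_{h\in\mathcal M(N)}\psi(Q_A(gh))\Bigr|\ll_A q^{N-\max(0,N-k-m)/2}, \] with implied constant depending only on $q$ and $A$, uniformly in $\ell_n$ and $\psi$.
   Context: $q$ is an odd prime power; fix $m\ge0$, $c_0,\dots,c_m\in\mathbb F_q$ with $c_m\ne0$, $A(z)=c_0+\tfrac12\sum_{\ell=1}^m c_\ell(z^\ell+z^{-\ell})$. $Q_{A,2}(f)=\operatorname{CT}\,A(z)f(z)f(z^{-1})=\sum_{j=0}^m c_j\sum_{i\ge j}f_if_{i-j}$. For each $n$, $\ell_n$ is an arbitrary linear form in the coefficients $f_0,\dots,f_n$, and for $f$ of degree $n$, $Q_A(f)=Q_{A,2}(f)+\ell_n(f)$. $\mathcal M(k)$ is the set of monic polynomials of degree $k$, $V_N$ the space of polynomials of degree $\le N$. Polar rank is the rank of $(x,y)\mapsto Q(x+y)-Q(x)-Q(y)$. *)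

theory Defs
  imports "HOL-Computational_Algebra.Polynomial" "HOL-Library.Cardinality" Complex_Main
begin

text \<open>The coefficient sequence c_0..c_m of A is given by a function c :: nat => 'a.
  Q_{A,2}(f) = sum_{j=0}^m c_j sum_{i >= j} f_i f_{i-j}.\<close>
definition QA2 :: "(nat \<Rightarrow> 'a::field) \<Rightarrow> nat \<Rightarrow> 'a poly \<Rightarrow> 'a" where
  "QA2 c m f = (\<Sum>j\<le>m. c j * (\<Sum>i\<in>{j..degree f}. coeff f i * coeff f (i - j)))"

definition linform :: "(nat \<Rightarrow> 'a::field) \<Rightarrow> nat \<Rightarrow> 'a poly \<Rightarrow> 'a" where
  "linform L n f = (\<Sum>i\<le>n. L i * coeff f i)"

definition QA :: "(nat \<Rightarrow> 'a::field) \<Rightarrow> nat \<Rightarrow> (nat \<Rightarrow> 'a) \<Rightarrow> nat \<Rightarrow> 'a poly \<Rightarrow> 'a" where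
  "QA c m L n f = QA2 c m f + linform L n f"

definition monics :: "nat \<Rightarrow> 'a::field poly set" where
  "monics k = {p. degree p = k \<and> lead_coeff p = 1}"

definition Vsp :: "nat \<Rightarrow> 'a::field poly set" where
  "Vsp N = {p. degree p \<le> N}"

definition polar :: "('v::ab_group_add \<Rightarrow> 'a::ab_group_add) \<Rightarrow> 'v \<Rightarrow> 'v \<Rightarrow> 'a" where
  "polar Q x y = Q (x + y) - Q x - Q y"

definition polar_rank :: "('a::field poly \<Rightarrow> 'a) \<Rightarrow> 'a poly set \<Rightarrow> nat" where
  "polar_rank Q V = vector_space.dim smult V
     - vector_space.dim smult {x \<in> V. \<forall>y\<in>V. polar Q x y = 0}"

definition nontriv_add_char :: "('a::field \<Rightarrow> complex) \<Rightarrow> bool" where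
  "nontriv_add_char \<psi> \<longleftrightarrow> (\<forall>x y. \<psi> (x + y) = \<psi> x * \<psi> y) \<and> (\<exists>x. \<psi> x \<noteq> 1)"

end

theory Submission
  imports Defs
begin

text \<open>
  The polar form of \<open>h \<mapsto> Q\<^sub>A\<^sub>,\<^sub>2(g h)\<close> is \<open>(x, y) \<mapsto> B(g x, g y) + B(g y, g x)\<close> for the
  bilinear form \<open>B(f, h) = \<Sum>\<^sub>j c\<^sub>j \<Sum>\<^sub>i f\<^sub>i h\<^sub>i\<^sub>-\<^sub>j\<close>. For \<open>x \<noteq> 0\<close>, pairing with a monomial
  \<open>y = X\<^sup>b\<close>, where \<open>b\<close> puts the lowest term of \<open>g X\<^sup>b\<close> exactly \<open>m\<close> above the top term of
  \<open>g x\<close>, leaves a single product: \<open>c\<^sub>m\<close> (or \<open>2 c\<^sub>0\<close> if \<open>m = 0\<close>) times two nonzero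
  coefficients. So no nonzero vector of degree \<open>\<le> N - k - m\<close> lies in the radical of the form on
  \<open>V\<^sub>N\<close>, and dropping the lowest \<open>N + 1 - k - m\<close> coefficients embeds the radical into a
  \<open>(k + m)\<close>-dimensional space.

  For the exponential sum, Weyl differencing over the coset \<open>\<M>(N) = X\<^sup>N + V\<^sub>N\<^sub>-\<^sub>1\<close> gives
  \<open>|S|\<^sup>2 \<le> |\<M>(N)| \<cdot> |radical|\<close>, because the inner character sums over \<open>h\<close> vanish for every shift
  outside the radical.
\<close>

lemma of_nat_CARD_eq_0: "of_nat CARD('a) = (0::'a::{finite,ring_1})"
proof -
  have "bij_betw (\<lambda>x. x + 1) (UNIV :: 'a set) UNIV"
    by (rule bij_betw_byWitness[where f' = "\<lambda>x. x - 1"]) auto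
  then have "(\<Sum>x\<in>UNIV. x + 1) = (\<Sum>x\<in>(UNIV :: 'a set). x)"
    by (rule sum.reindex_bij_betw)
  then show ?thesis
    by (simp add: sum.distrib)
qed

lemma two_neq_zero_if_odd_card:
  assumes "odd CARD('a::{finite,field})"
  shows "(2::'a) \<noteq> 0"
proof
  assume "(2::'a) = 0"
  then have "CHAR('a) dvd 2"
    using of_nat_eq_0_iff_char_dvd[where 'a='a, of 2] by simp
  moreover have "CHAR('a) \<noteq> 1"
    using of_nat_CHAR[where 'a='a] by auto
  ultimately have "CHAR('a) = 2"
    using two_is_prime_nat prime_nat_iff by blast
  then show False
    using assms of_nat_CARD_eq_0[where 'a='a] of_nat_eq_0_iff_char_dvd[where 'a='a] by auto
qed

section \<open>Polynomials of bounded degree\<close>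

interpretation poly_vs: vector_space "smult :: 'a::field \<Rightarrow> 'a poly \<Rightarrow> 'a poly"
  by unfold_locales (simp_all add: smult_add_right smult_add_left)

lemma linear_poly_shift: "Vector_Spaces.linear smult smult (poly_shift n :: 'a::field poly \<Rightarrow> 'a poly)"
  by unfold_locales (auto simp: poly_eq_iff coeff_poly_shift smult_add_right smult_add_left)

lemma dim_le_card_if_inj_linear:
  assumes "Vector_Spaces.linear s s f" "inj_on f (module.span s S)" "f ` S \<subseteq> module.span s T" "finite T"
  shows "vector_space.dim s S \<le> card T"
proof -
  interpret Vector_Spaces.linear s s f by fact
  obtain B where B: "B \<subseteq> S" "vs1.independent B" "S \<subseteq> vs1.span B" "card B = vs1.dim S"
    using vs1.basis_exists by blast
  have inj_B: "inj_on f (vs1.span B)"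
    using assms(2) vs1.span_mono[OF B(1)] by (rule inj_on_subset)
  have "card (f ` B) \<le> card T"
    using vs1.independent_span_bound[OF assms(4) independent_injective_image[OF B(2) inj_B]] B(1) assms(3)
    by blast
  moreover have "card (f ` B) = card B"
    using inj_B vs1.span_superset by (intro card_image) (rule inj_on_subset)
  ultimately show ?thesis
    using B(4) by simp
qed

definition polys_below :: "nat \<Rightarrow> 'a::zero poly set" where
  "polys_below n = {p. \<forall>i\<ge>n. coeff p i = 0}"

lemma Vsp_eq_polys_below: "Vsp N = polys_below (Suc N)"
  by (auto simp: Vsp_def polys_below_def coeff_eq_0 intro: degree_le)

lemma polys_below_eq_span: "polys_below n = poly_vs.span ((\<lambda>i. monom 1 i) ` {..<n})"
proof safe
  fix p :: "'a poly" assume "p \<in> polys_below n"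
  then have "p = (\<Sum>i<n. smult (coeff p i) (monom 1 i))"
    by (intro poly_eqI) (auto simp: polys_below_def coeff_sum smult_monom coeff_monom not_less)
  also have "\<dots> \<in> poly_vs.span ((\<lambda>i. monom 1 i) ` {..<n})"
    by (intro poly_vs.span_sum poly_vs.span_scale poly_vs.span_base) auto
  finally show "p \<in> poly_vs.span ((\<lambda>i. monom 1 i) ` {..<n})" .
next
  fix p :: "'a poly" assume "p \<in> poly_vs.span ((\<lambda>i. monom 1 i) ` {..<n})"
  then show "p \<in> polys_below n"
    by (induction rule: poly_vs.span_induct_alt) (auto simp: polys_below_def)
qed

lemma independent_monoms: "poly_vs.independent ((\<lambda>i. monom (1::'a::field) i) ` A)"
  unfolding poly_vs.dependent_explicit
proof clarify
  fix T :: "'a poly set" and u v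
  assume T: "finite T" "T \<subseteq> (\<lambda>i. monom 1 i) ` A" "(\<Sum>v\<in>T. smult (u v) v) = 0" "v \<in> T" "u v \<noteq> 0"
  obtain i where v: "v = monom 1 i"
    using T by auto
  have "coeff (\<Sum>w\<in>T. smult (u w) w) i = (\<Sum>w\<in>T. if w = v then u w else 0)"
    unfolding coeff_sum using T(2) v by (intro sum.cong) (auto simp: smult_monom coeff_monom monom_eq_iff')
  also have "\<dots> = u v"
    using T by simp
  finally show False
    using T by simp
qed

lemma dim_polys_below: "poly_vs.dim (polys_below n :: 'a::field poly set) = n"
proof -
  have "poly_vs.dim (polys_below n :: 'a poly set) = card ((\<lambda>i. monom (1::'a) i) ` {..<n})"
    unfolding polys_below_eq_span by (rule poly_vs.dim_span_eq_card_independent[OF independent_monoms])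
  also have "\<dots> = n"
    by (subst card_image) (auto simp: inj_on_def monom_eq_iff')
  finally show ?thesis .
qed

lemma subspace_polys_below: "poly_vs.subspace (polys_below n)"
  unfolding polys_below_eq_span by simp

lemma card_polys_below: "card (polys_below n :: 'a::{finite,zero} poly set) = CARD('a) ^ n"
proof -
  have "bij_betw (\<lambda>p. map (coeff p) [0..<n]) (polys_below n :: 'a poly set) {xs. length xs = n}"
  proof (rule bij_betw_byWitness[where f' = Poly])
    show "\<forall>p\<in>polys_below n. Poly (map (coeff p) [0..<n]) = p"
      by (auto simp: polys_below_def nth_default_def not_less intro!: poly_eqI)
    show "\<forall>xs\<in>{xs. length xs = n}. map (coeff (Poly xs)) [0..<n] = xs"
      by (auto simp: nth_default_nth intro: nth_equalityI)
    show "Poly ` {xs. length xs = n} \<subseteq> polys_below n"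
      by (auto simp: polys_below_def nth_default_beyond)
  qed auto
  then show ?thesis
    using card_lists_length_eq[of "UNIV :: 'a set" n] by (simp add: bij_betw_same_card)
qed

lemma finite_polys_below: "finite (polys_below n :: 'a::{finite,zero} poly set)"
  using card_polys_below[where 'a='a, of n] by (intro card_ge_0_finite) simp

lemma poly_shift_polys_below: "poly_shift r ` polys_below (r + n) \<subseteq> polys_below n"
  by (auto simp: polys_below_def coeff_poly_shift)

lemma poly_shift_eq_0_iff: "poly_shift r p = 0 \<longleftrightarrow> p \<in> polys_below r"
  by (auto simp: polys_below_def poly_eq_iff coeff_poly_shift) (metis le_add_diff_inverse2)

lemma monics_eq_image: "monics n = (\<lambda>p. monom 1 n + p) ` polys_below n"
proof safe
  fix h :: "'a poly" assume "h \<in> monics n"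
  then have "h - monom 1 n \<in> polys_below n"
    by (auto simp: monics_def polys_below_def coeff_eq_0 le_less)
  then show "h \<in> (\<lambda>p. monom 1 n + p) ` polys_below n"
    by (intro image_eqI[of _ _ "h - monom 1 n"]) auto
next
  fix p :: "'a poly" assume "p \<in> polys_below n"
  then have lead: "coeff (monom 1 n + p) n = 1" and "\<forall>i>n. coeff (monom 1 n + p) i = 0"
    by (auto simp: polys_below_def)
  then have "degree (monom 1 n + p) = n"
    by (intro antisym degree_le le_degree) auto
  then show "monom 1 n + p \<in> monics n"
    using lead by (simp add: monics_def)
qed

lemma bij_betw_add_monics:
  assumes "h \<in> monics n"
  shows "bij_betw (\<lambda>z. h + z) (polys_below n) (monics n)"
proof -
  obtain p where p: "p \<in> polys_below n" "h = monom 1 n + p"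
    using assms monics_eq_image by blast
  have "(\<lambda>z. p + z) ` polys_below n = polys_below n"
    using p(1) poly_vs.subspace_add[OF subspace_polys_below] poly_vs.subspace_diff[OF subspace_polys_below]
    by (auto intro!: image_eqI[where x = "_ - p"])
  then have "(\<lambda>z. h + z) ` polys_below n = monics n"
    unfolding monics_eq_image p(2) by (simp add: image_image add.assoc flip: image_image[of "(+) (monom 1 n)" "(+) p"])
  then show ?thesis
    by (auto simp: bij_betw_def inj_on_def)
qed

lemma card_monics: "card (monics n :: 'a::{finite,field} poly set) = CARD('a) ^ n"
  unfolding monics_eq_image by (subst card_image) (auto simp: inj_on_def card_polys_below)

section \<open>The bilinear form underlying \<open>Q\<^sub>A\<^sub>,\<^sub>2\<close>\<close>

definition QA2_bilinear :: "(nat \<Rightarrow> 'a::field) \<Rightarrow> nat \<Rightarrow> 'a poly \<Rightarrow> 'a poly \<Rightarrow> 'a" where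
  "QA2_bilinear c m f h = (\<Sum>j\<le>m. c j * (\<Sum>i\<in>{j..degree f}. coeff f i * coeff h (i - j)))"

lemma QA2_eq_bilinear: "QA2 c m f = QA2_bilinear c m f f"
  by (simp add: QA2_def QA2_bilinear_def)

lemma QA2_bilinear_upto:
  assumes "degree f \<le> D"
  shows "QA2_bilinear c m f h = (\<Sum>j\<le>m. c j * (\<Sum>i\<in>{j..D}. coeff f i * coeff h (i - j)))"
proof -
  have "(\<Sum>i\<in>{j..degree f}. coeff f i * coeff h (i - j)) = (\<Sum>i\<in>{j..D}. coeff f i * coeff h (i - j))"
    for j
    using assms by (intro sum.mono_neutral_left) (auto simp: coeff_eq_0)
  then show ?thesis
    by (simp add: QA2_bilinear_def)
qed

lemma QA2_bilinear_add_left: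
  "QA2_bilinear c m (f + f') h = QA2_bilinear c m f h + QA2_bilinear c m f' h"
proof -
  define D where "D = max (degree f) (degree f')"
  have "degree f \<le> D" "degree f' \<le> D" "degree (f + f') \<le> D"
    using degree_add_le_max by (auto simp: D_def)
  then show ?thesis
    by (simp add: QA2_bilinear_upto[where D = D] algebra_simps sum.distrib)
qed

lemma QA2_bilinear_add_right:
  "QA2_bilinear c m f (h + h') = QA2_bilinear c m f h + QA2_bilinear c m f h'"
  by (simp add: QA2_bilinear_def algebra_simps sum.distrib)

lemma QA2_bilinear_smult_left: "QA2_bilinear c m (smult u f) h = u * QA2_bilinear c m f h"
  by (simp add: QA2_bilinear_upto[where D = "degree f"] algebra_simps sum_distrib_left)

lemma QA2_bilinear_smult_right: "QA2_bilinear c m f (smult u h) = u * QA2_bilinear c m f h"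
  by (simp add: QA2_bilinear_def algebra_simps sum_distrib_left)

lemma polar_QA2: "polar (QA2 c m) f h = QA2_bilinear c m f h + QA2_bilinear c m h f"
  by (simp add: polar_def QA2_eq_bilinear QA2_bilinear_add_left QA2_bilinear_add_right)

lemma polar_QA2_mult: "polar (\<lambda>h. QA2 c m (g * h)) x y = polar (QA2 c m) (g * x) (g * y)"
  by (simp add: polar_def distrib_left)

lemma polar_QA2_mult_add_left:
  "polar (\<lambda>h. QA2 c m (g * h)) (x + x') y
     = polar (\<lambda>h. QA2 c m (g * h)) x y + polar (\<lambda>h. QA2 c m (g * h)) x' y"
  by (simp add: polar_QA2_mult polar_QA2 distrib_left QA2_bilinear_add_left QA2_bilinear_add_right)

lemma polar_QA2_mult_smult_left:
  "polar (\<lambda>h. QA2 c m (g * h)) (smult u x) y = u * polar (\<lambda>h. QA2 c m (g * h)) x y"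
  by (simp add: polar_QA2_mult polar_QA2 QA2_bilinear_smult_left QA2_bilinear_smult_right
      mult_smult_right distrib_left)

lemma QA2_bilinear_low_high:
  assumes f: "degree f \<le> d" and h: "\<And>i. i < d + m \<Longrightarrow> coeff h i = 0"
  shows "QA2_bilinear c m f h = (if m = 0 then c 0 * coeff f d * coeff h d else 0)"
proof -
  have "coeff f i * coeff h (i - j) = (if m = 0 \<and> i = d then coeff f d * coeff h d else 0)"
    if "j \<le> m" "j \<le> i" for i j
  proof (cases "i \<le> d")
    case True
    with that h[of "i - j"] show ?thesis by auto
  next
    case False
    with f show ?thesis by (auto simp: coeff_eq_0)
  qed
  then have "QA2_bilinear c m f h
      = (\<Sum>j\<le>m. c j * (\<Sum>i\<in>{j..d}. if m = 0 \<and> i = d then coeff f d * coeff h d else 0))"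
    unfolding QA2_bilinear_upto[OF f] by (intro sum.cong refl arg_cong[where f = "(*) _"]) auto
  also have "\<dots> = (if m = 0 then c 0 * coeff f d * coeff h d else 0)"
    by (cases "m = 0") auto
  finally show ?thesis .
qed

lemma QA2_bilinear_high_low:
  assumes f: "degree f \<le> d" and h: "\<And>i. i < d + m \<Longrightarrow> coeff h i = 0"
  shows "QA2_bilinear c m h f = c m * coeff h (d + m) * coeff f d"
proof -
  define D where "D = max (degree h) (d + m)"
  have "degree h \<le> D"
    by (simp add: D_def)
  have "coeff h i * coeff f (i - j) = (if j = m \<and> i = d + m then coeff h (d + m) * coeff f d else 0)"
    if "j \<le> m" "j \<le> i" for i j
  proof (cases "i < d + m")
    case True
    with h show ?thesis by auto
  next
    case False
    with that f show ?thesis by (auto simp: coeff_eq_0)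
  qed
  then have "QA2_bilinear c m h f
      = (\<Sum>j\<le>m. c j * (\<Sum>i\<in>{j..D}. if j = m \<and> i = d + m then coeff h (d + m) * coeff f d else 0))"
    unfolding QA2_bilinear_upto[OF \<open>degree h \<le> D\<close>] by (intro sum.cong refl arg_cong[where f = "(*) _"]) auto
  also have "\<dots> = (\<Sum>j\<le>m. if j = m then c j * (coeff h (d + m) * coeff f d) else 0)"
    by (intro sum.cong refl) (auto simp: D_def)
  also have "\<dots> = c m * coeff h (d + m) * coeff f d"
    by simp
  finally show ?thesis .
qed

lemma exists_monom_polar_QA2_mult_neq_0:
  fixes g x :: "'a::field poly"
  assumes g: "g \<noteq> 0" and x: "x \<noteq> 0" and cm: "c m \<noteq> 0" and two: "(2::'a) \<noteq> 0"
  obtains b where "b \<le> degree x + degree g + m" "polar (\<lambda>h. QA2 c m (g * h)) x (monom 1 b) \<noteq> 0"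
proof -
  define s where "s = (LEAST i. coeff g i \<noteq> 0)"
  have gs: "coeff g s \<noteq> 0" and s_le: "s \<le> degree g"
    using g LeastI[of "\<lambda>i. coeff g i \<noteq> 0" "degree g"] Least_le[of "\<lambda>i. coeff g i \<noteq> 0" "degree g"]
    by (simp_all add: s_def)
  have g_low: "coeff g i = 0" if "i < s" for i
    using that not_less_Least unfolding s_def by blast
  define d where "d = degree x + degree g"
  have gx: "degree (g * x) \<le> d" "coeff (g * x) d = lead_coeff g * lead_coeff x"
    using g x by (simp_all add: d_def degree_mult_eq coeff_mult_degree_sum add.commute)
  define b where "b = d + m - s"
  define h where "h = g * monom 1 b"
  have h_coeff: "coeff h i = (if i < b then 0 else coeff g (i - b))" for i
    by (simp add: h_def mult.commute[of g] coeff_monom_mult)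
  have h_low: "coeff h i = 0" if "i < d + m" for i
    using that s_le g_low by (auto simp: h_coeff b_def d_def)
  have h_lead: "coeff h (d + m) = coeff g s"
    using s_le by (simp add: h_coeff b_def d_def)
  have "polar (\<lambda>h. QA2 c m (g * h)) x (monom 1 b) = QA2_bilinear c m (g * x) h + QA2_bilinear c m h (g * x)"
    by (simp add: polar_QA2_mult polar_QA2 h_def)
  also have "\<dots> = (if m = 0 then 2 * c 0 else c m) * (coeff g s * (lead_coeff g * lead_coeff x))"
    using QA2_bilinear_low_high[where c = c and m = m, OF gx(1) h_low]
      QA2_bilinear_high_low[where c = c and m = m, OF gx(1) h_low] h_lead
    by (cases "m = 0") (simp_all add: gx(2) algebra_simps)
  finally have "polar (\<lambda>h. QA2 c m (g * h)) x (monom 1 b) \<noteq> 0"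
    using g x gs cm two by auto
  moreover have "b \<le> degree x + degree g + m"
    by (simp add: b_def d_def)
  ultimately show thesis
    by (rule that[rotated])
qed

section \<open>The radical of \<open>h \<mapsto> Q\<^sub>A\<^sub>,\<^sub>2(g h)\<close>\<close>

lemma polar_commute: "polar Q x y = polar Q y x"
  by (simp add: polar_def add.commute)

definition radical :: "('v::ab_group_add \<Rightarrow> 'a::ab_group_add) \<Rightarrow> 'v set \<Rightarrow> 'v set" where
  "radical Q V = {x \<in> V. \<forall>y\<in>V. polar Q x y = 0}"

lemma polar_rank_eq_radical: "polar_rank Q V = poly_vs.dim V - poly_vs.dim (radical Q V)"
  by (simp add: polar_rank_def radical_def)

lemma subspace_radical:
  fixes Q :: "'a::field poly \<Rightarrow> 'a"
  assumes add: "\<And>x x' y. polar Q (x + x') y = polar Q x y + polar Q x' y"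
    and smult: "\<And>u x y. polar Q (smult u x) y = u * polar Q x y"
    and V: "poly_vs.subspace V"
  shows "poly_vs.subspace (radical Q V)"
proof -
  have "polar Q 0 y = 0" for y
    using smult[of 0 0 y] by simp
  then show ?thesis
    using V by (auto simp: poly_vs.subspace_def radical_def add smult)
qed

lemma subspace_radical_QA2_mult: "poly_vs.subspace (radical (\<lambda>h. QA2 c m (g * h)) (polys_below n))"
  by (intro subspace_radical polar_QA2_mult_add_left polar_QA2_mult_smult_left subspace_polys_below)

lemma radical_QA2_mult_eq_0:
  fixes g :: "'a::field poly"
  assumes "g \<noteq> 0" "c m \<noteq> 0" "(2::'a) \<noteq> 0"
    and x: "x \<in> radical (\<lambda>h. QA2 c m (g * h)) (polys_below n)" "x \<in> polys_below r"
    and n: "r + degree g + m \<le> n"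
  shows "x = 0"
proof (rule ccontr)
  assume "x \<noteq> 0"
  have "degree x < r"
  proof (rule ccontr)
    assume "\<not> degree x < r"
    then have "lead_coeff x = 0"
      using x(2) by (simp add: polys_below_def)
    with \<open>x \<noteq> 0\<close> show False
      by simp
  qed
  obtain b where b: "b \<le> degree x + degree g + m" "polar (\<lambda>h. QA2 c m (g * h)) x (monom 1 b) \<noteq> 0"
    using exists_monom_polar_QA2_mult_neq_0 assms(1-3) \<open>x \<noteq> 0\<close> by blast
  have "monom 1 b \<in> polys_below n"
    using b(1) \<open>degree x < r\<close> n by (auto simp: polys_below_def)
  then show False
    using x(1) b(2) by (auto simp: radical_def)
qed

lemma inj_on_poly_shift_radical_QA2_mult:
  fixes g :: "'a::field poly"
  assumes "g \<noteq> 0" "c m \<noteq> 0" "(2::'a) \<noteq> 0" "degree g + m \<le> n"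
  shows "inj_on (poly_shift (n - (degree g + m))) (radical (\<lambda>h. QA2 c m (g * h)) (polys_below n))"
proof (rule inj_onI)
  let ?R = "radical (\<lambda>h. QA2 c m (g * h)) (polys_below n)"
  let ?r = "n - (degree g + m)"
  fix x z assume xz: "x \<in> ?R" "z \<in> ?R" "poly_shift ?r x = poly_shift ?r z"
  have "poly_shift ?r (x - z) = 0"
    using xz(3) by (simp add: poly_eq_iff coeff_poly_shift)
  then have "x - z \<in> polys_below ?r"
    by (simp add: poly_shift_eq_0_iff)
  moreover have "x - z \<in> ?R"
    using xz(1,2) poly_vs.subspace_diff[OF subspace_radical_QA2_mult] by blast
  ultimately have "x - z = 0"
    using assms by (intro radical_QA2_mult_eq_0[where g = g and c = c and m = m and n = n and r = ?r]) auto
  then show "x = z"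
    by simp
qed

lemma dim_radical_QA2_mult_le:
  fixes g :: "'a::field poly"
  assumes "g \<noteq> 0" "c m \<noteq> 0" "(2::'a) \<noteq> 0"
  shows "poly_vs.dim (radical (\<lambda>h. QA2 c m (g * h)) (polys_below n)) \<le> degree g + m"
proof (cases "degree g + m \<le> n")
  case True
  let ?R = "radical (\<lambda>h. QA2 c m (g * h)) (polys_below n)"
  let ?r = "n - (degree g + m)"
  have "?R \<subseteq> polys_below (?r + (degree g + m))"
    using True by (auto simp: radical_def)
  then have image: "poly_shift ?r ` ?R \<subseteq> poly_vs.span ((\<lambda>i. monom 1 i) ` {..<degree g + m})"
    using poly_shift_polys_below polys_below_eq_span by blast
  have span_R: "poly_vs.span ?R = ?R"
    by (rule poly_vs.span_eq_iff[THEN iffD2, OF subspace_radical_QA2_mult])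
  have inj: "inj_on (poly_shift ?r) (poly_vs.span ?R)"
    unfolding span_R by (rule inj_on_poly_shift_radical_QA2_mult[of g c m, OF assms True])
  have "poly_vs.dim ?R \<le> card ((\<lambda>i. monom (1::'a) i) ` {..<degree g + m})"
    by (rule dim_le_card_if_inj_linear[OF linear_poly_shift inj image]) simp
  also have "\<dots> \<le> degree g + m"
    using card_image_le[of "{..<degree g + m}"] by simp
  finally show ?thesis .
next
  case False
  have "radical (\<lambda>h. QA2 c m (g * h)) (polys_below n) \<subseteq> poly_vs.span ((\<lambda>i. monom 1 i) ` {..<n})"
    by (auto simp: radical_def simp flip: polys_below_eq_span)
  then have "poly_vs.dim (radical (\<lambda>h. QA2 c m (g * h)) (polys_below n)) \<le> card ((\<lambda>i. monom (1::'a) i) ` {..<n})"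
    by (rule poly_vs.dim_le_card) simp
  also have "\<dots> \<le> n"
    using card_image_le[of "{..<n}"] by simp
  finally show ?thesis
    using False by simp
qed

lemma card_radical_QA2_mult_le:
  fixes g :: "'a::{finite,field} poly"
  assumes "g \<noteq> 0" "c m \<noteq> 0" "(2::'a) \<noteq> 0"
  shows "card (radical (\<lambda>h. QA2 c m (g * h)) (polys_below n)) \<le> CARD('a) ^ min n (degree g + m)"
proof (cases "degree g + m \<le> n")
  case True
  let ?R = "radical (\<lambda>h. QA2 c m (g * h)) (polys_below n)"
  let ?r = "n - (degree g + m)"
  have "card ?R = card (poly_shift ?r ` ?R)"
    using inj_on_poly_shift_radical_QA2_mult[of g c m, OF assms True] by (simp add: card_image)
  also have "\<dots> \<le> card (polys_below (degree g + m) :: 'a poly set)"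
  proof (intro card_mono finite_polys_below)
    have "?R \<subseteq> polys_below (?r + (degree g + m))"
      using True by (auto simp: radical_def)
    then show "poly_shift ?r ` ?R \<subseteq> polys_below (degree g + m)"
      using poly_shift_polys_below by blast
  qed
  finally show ?thesis
    using True by (simp add: card_polys_below)
next
  case False
  then have "card (radical (\<lambda>h. QA2 c m (g * h)) (polys_below n)) \<le> card (polys_below n :: 'a poly set)"
    by (intro card_mono finite_polys_below) (auto simp: radical_def)
  with False show ?thesis
    by (simp add: card_polys_below)
qed

lemma polar_rank_QA2_mult_ge:
  fixes g :: "'a::field poly"
  assumes "g \<noteq> 0" "c m \<noteq> 0" "(2::'a) \<noteq> 0"
  shows "Suc N - (degree g + m) \<le> polar_rank (\<lambda>h. QA2 c m (g * h)) (Vsp N)"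
  using dim_radical_QA2_mult_le[of g c m "Suc N", OF assms]
  by (simp add: polar_rank_eq_radical Vsp_eq_polys_below dim_polys_below)

section \<open>Character sums\<close>

lemma add_char_norm_eq_1:
  fixes \<psi> :: "'a::{finite,field} \<Rightarrow> complex"
  assumes add: "\<And>x y. \<psi> (x + y) = \<psi> x * \<psi> y" and "\<psi> 0 \<noteq> 0"
  shows "norm (\<psi> x) = 1"
proof -
  have "\<psi> 0 = 1"
    using add[of 0 0] \<open>\<psi> 0 \<noteq> 0\<close> by simp
  have pow: "\<psi> x ^ n = \<psi> (of_nat n * x)" for n
    by (induction n) (simp_all add: \<open>\<psi> 0 = 1\<close> add algebra_simps)
  have "norm (\<psi> x) ^ CHAR('a) = 1"
    using pow[of "CHAR('a)"] \<open>\<psi> 0 = 1\<close> by (simp flip: norm_power)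
  moreover have "CHAR('a) > 0"
    by (simp add: finite_imp_CHAR_pos)
  ultimately show ?thesis
    using power_eq_imp_eq_base[of "norm (\<psi> x)" "CHAR('a)" 1] by simp
qed

lemma add_char_cnj:
  fixes \<psi> :: "'a::ab_group_add \<Rightarrow> complex"
  assumes add: "\<And>x y. \<psi> (x + y) = \<psi> x * \<psi> y" and norm: "\<And>x. norm (\<psi> x) = 1"
  shows "cnj (\<psi> x) = \<psi> (- x)"
proof -
  have "\<psi> 0 \<noteq> 0"
    using norm[of 0] by auto
  then have "\<psi> 0 = 1"
    using add[of 0 0] by simp
  then have "inverse (\<psi> x) = \<psi> (- x)"
    by (intro inverse_unique) (simp flip: add)
  moreover have "inverse (\<psi> x) = cnj (\<psi> x)"
    using complex_norm_square[of "\<psi> x"] norm by (intro inverse_unique) simp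
  ultimately show ?thesis
    by simp
qed

lemma sum_add_char_shift_eq_0:
  fixes \<psi> :: "'a::plus \<Rightarrow> complex"
  assumes add: "\<And>x y. \<psi> (x + y) = \<psi> x * \<psi> y" and e: "\<psi> e \<noteq> 1"
    and bij: "bij_betw (\<lambda>h. h + w) M M" and shift: "\<And>h. h \<in> M \<Longrightarrow> l (h + w) = l h + e"
  shows "(\<Sum>h\<in>M. \<psi> (l h)) = 0"
proof -
  have "(\<Sum>h\<in>M. \<psi> (l h)) = (\<Sum>h\<in>M. \<psi> (l (h + w)))"
    using sum.reindex_bij_betw[OF bij, of "\<lambda>h. \<psi> (l h)"] by simp
  also have "\<dots> = (\<Sum>h\<in>M. \<psi> e * \<psi> (l h))"
    by (intro sum.cong refl) (simp add: shift add mult.commute)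
  also have "\<dots> = \<psi> e * (\<Sum>h\<in>M. \<psi> (l h))"
    by (simp add: sum_distrib_left)
  finally have "(1 - \<psi> e) * (\<Sum>h\<in>M. \<psi> (l h)) = 0"
    by (simp add: algebra_simps)
  with e show ?thesis
    by simp
qed

lemma bij_betw_translate_coset:
  fixes M W :: "'v::ab_group_add set"
  assumes coset: "\<And>h. h \<in> M \<Longrightarrow> bij_betw (\<lambda>z. h + z) W M" and "w \<in> W" "- w \<in> W"
  shows "bij_betw (\<lambda>h. h + w) M M"
proof -
  have closed: "h + v \<in> M" if "h \<in> M" "v \<in> W" for h v
    using bij_betw_apply[OF coset[OF that(1)] that(2)] .
  show ?thesis
  proof (rule bij_betw_byWitness[where f' = "\<lambda>h. h - w"])
    show "\<forall>h\<in>M. h + w - w = h" "\<forall>h\<in>M. h - w + w = h"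
      by simp_all
    show "(\<lambda>h. h + w) ` M \<subseteq> M"
      using closed \<open>w \<in> W\<close> by blast
    show "(\<lambda>h. h - w) ` M \<subseteq> M"
      using closed[of _ "- w"] \<open>- w \<in> W\<close> by auto
  qed
qed

lemma sum_add_char_mult_cnj:
  fixes F :: "'v::ab_group_add \<Rightarrow> 'a::ab_group_add" and \<psi> :: "'a \<Rightarrow> complex"
  assumes add: "\<And>x y. \<psi> (x + y) = \<psi> x * \<psi> y" and cnj: "\<And>x. cnj (\<psi> x) = \<psi> (- x)"
    and coset: "\<And>h. h \<in> M \<Longrightarrow> bij_betw (\<lambda>z. h + z) W M"
  shows "(\<Sum>h\<in>M. \<psi> (F h)) * cnj (\<Sum>h\<in>M. \<psi> (F h)) = (\<Sum>z\<in>W. \<Sum>h\<in>M. \<psi> (F (h + z) - F h))"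
proof -
  have diff: "\<psi> (a - b) = \<psi> a * cnj (\<psi> b)" for a b
    using add[of a "- b"] by (simp add: cnj)
  have "(\<Sum>h\<in>M. \<psi> (F h)) * cnj (\<Sum>h\<in>M. \<psi> (F h)) = (\<Sum>h'\<in>M. \<Sum>h\<in>M. \<psi> (F h' - F h))"
    by (simp add: cnj_sum sum_product diff)
  also have "\<dots> = (\<Sum>h\<in>M. \<Sum>h'\<in>M. \<psi> (F h' - F h))"
    by (rule sum.swap)
  also have "\<dots> = (\<Sum>h\<in>M. \<Sum>z\<in>W. \<psi> (F (h + z) - F h))"
  proof (rule sum.cong[OF refl])
    fix h assume "h \<in> M"
    show "(\<Sum>h'\<in>M. \<psi> (F h' - F h)) = (\<Sum>z\<in>W. \<psi> (F (h + z) - F h))"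
      using sum.reindex_bij_betw[OF coset[OF \<open>h \<in> M\<close>], of "\<lambda>h'. \<psi> (F h' - F h)"] by simp
  qed
  also have "\<dots> = (\<Sum>z\<in>W. \<Sum>h\<in>M. \<psi> (F (h + z) - F h))"
    by (rule sum.swap)
  finally show ?thesis .
qed

lemma sum_add_char_polar_eq_0:
  fixes Q :: "'a::field poly \<Rightarrow> 'a" and \<psi> :: "'a \<Rightarrow> complex"
  assumes add: "\<And>x y. \<psi> (x + y) = \<psi> x * \<psi> y" and e: "\<psi> e \<noteq> 1"
    and polar_add: "\<And>x x' y. polar Q (x + x') y = polar Q x y + polar Q x' y"
    and polar_smult: "\<And>u x y. polar Q (smult u x) y = u * polar Q x y"
    and W: "poly_vs.subspace W" and coset: "\<And>h. h \<in> M \<Longrightarrow> bij_betw (\<lambda>z. h + z) W M"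
    and z: "z \<in> W - radical Q W"
  shows "(\<Sum>h\<in>M. \<psi> (polar Q h z)) = 0"
proof -
  obtain w where "w \<in> W" "polar Q z w \<noteq> 0"
    using z by (auto simp: radical_def)
  then have w: "w \<in> W" "polar Q w z \<noteq> 0"
    by (simp_all add: polar_commute)
  define w' where "w' = smult (e / polar Q w z) w"
  have "w' \<in> W" "- w' \<in> W"
    using w(1) poly_vs.subspace_scale[OF W] poly_vs.subspace_neg[OF W] by (auto simp: w'_def)
  moreover have "polar Q w' z = e"
    using w(2) by (simp add: w'_def polar_smult)
  ultimately show ?thesis
    using e polar_add by (intro sum_add_char_shift_eq_0[OF add _ bij_betw_translate_coset[OF coset]]) auto
qed

lemma norm_sum_add_char_quadratic_sq_le:
  fixes Q l :: "'a::field poly \<Rightarrow> 'a" and \<psi> :: "'a \<Rightarrow> complex"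
  assumes add: "\<And>x y. \<psi> (x + y) = \<psi> x * \<psi> y" and norm: "\<And>x. norm (\<psi> x) = 1" and e: "\<psi> e \<noteq> 1"
    and polar_add: "\<And>x x' y. polar Q (x + x') y = polar Q x y + polar Q x' y"
    and polar_smult: "\<And>u x y. polar Q (smult u x) y = u * polar Q x y"
    and l_add: "\<And>x y. l (x + y) = l x + l y"
    and W: "poly_vs.subspace W" "finite W"
    and coset: "\<And>h. h \<in> M \<Longrightarrow> bij_betw (\<lambda>z. h + z) W M"
  shows "norm (\<Sum>h\<in>M. \<psi> (Q h + l h)) ^ 2 \<le> real (card M) * real (card (radical Q W))"
proof -
  define S where "S = (\<Sum>h\<in>M. \<psi> (Q h + l h))"
  define T where "T z = (\<Sum>h\<in>M. \<psi> (polar Q h z))" for z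
  have phase_diff: "Q (h + z) + l (h + z) - (Q h + l h) = polar Q h z + (Q z + l z)" for h z
    by (simp add: polar_def l_add)
  have "S * cnj S = (\<Sum>z\<in>W. \<Sum>h\<in>M. \<psi> (Q (h + z) + l (h + z) - (Q h + l h)))"
    unfolding S_def by (rule sum_add_char_mult_cnj[OF add add_char_cnj[OF add norm] coset])
  also have "\<dots> = (\<Sum>z\<in>W. \<Sum>h\<in>M. \<psi> (polar Q h z) * \<psi> (Q z + l z))"
    by (simp only: phase_diff add)
  also have "\<dots> = (\<Sum>z\<in>W. \<psi> (Q z + l z) * T z)"
    by (simp add: T_def sum_distrib_left mult.commute)
  also have "\<dots> = (\<Sum>z\<in>radical Q W. \<psi> (Q z + l z) * T z)"
  proof (rule sum.mono_neutral_right[OF W(2)])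
    show "radical Q W \<subseteq> W"
      by (auto simp: radical_def)
    show "\<forall>z\<in>W - radical Q W. \<psi> (Q z + l z) * T z = 0"
      using sum_add_char_polar_eq_0[OF add e polar_add polar_smult W(1) coset] by (simp add: T_def)
  qed
  finally have "norm S ^ 2 = norm (\<Sum>z\<in>radical Q W. \<psi> (Q z + l z) * T z)"
    using complex_norm_square[of S] by (metis norm_of_real abs_of_nonneg zero_le_power2 norm_ge_zero)
  also have "\<dots> \<le> (\<Sum>z\<in>radical Q W. real (card M))"
  proof (rule order.trans[OF norm_sum sum_mono])
    fix z
    have "norm (T z) \<le> (\<Sum>h\<in>M. norm (\<psi> (polar Q h z)))"
      unfolding T_def by (rule norm_sum)
    then show "norm (\<psi> (Q z + l z) * T z) \<le> real (card M)"
      by (simp add: norm_mult norm)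
  qed
  finally show ?thesis
    by (simp add: S_def mult.commute)
qed

lemma norm_sum_monics_QA_le:
  fixes g :: "'a::{finite,field} poly" and \<psi> :: "'a \<Rightarrow> complex"
  assumes "g \<noteq> 0" "c m \<noteq> 0" "(2::'a) \<noteq> 0" and \<psi>: "nontriv_add_char \<psi>"
  shows "norm (\<Sum>h\<in>monics N. \<psi> (QA c m L n (g * h)))
           \<le> real CARD('a) powr ((real N + real (min N (degree g + m))) / 2)"
proof (cases "\<psi> 0 = 0")
  case True
  \<comment> \<open>\<open>nontriv_add_char\<close> does not exclude the zero function.\<close>
  then have "\<psi> x = 0" for x
    using \<psi> unfolding nontriv_add_char_def by (metis add_0_right mult_zero_right)
  then show ?thesis
    by simp
next
  case False
  define q where "q = real CARD('a)"
  define K where "K = min N (degree g + m)"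
  have add: "\<And>x y. \<psi> (x + y) = \<psi> x * \<psi> y"
    using \<psi> by (simp add: nontriv_add_char_def)
  obtain e where e: "\<psi> e \<noteq> 1"
    using \<psi> by (auto simp: nontriv_add_char_def)
  have linform_add: "linform L n (g * (x + y)) = linform L n (g * x) + linform L n (g * y)" for x y
    by (simp add: linform_def distrib_left sum.distrib algebra_simps)
  have "norm (\<Sum>h\<in>monics N. \<psi> (QA2 c m (g * h) + linform L n (g * h))) ^ 2
      \<le> real (card (monics N :: 'a poly set)) * real (card (radical (\<lambda>h. QA2 c m (g * h)) (polys_below N)))"
    by (rule norm_sum_add_char_quadratic_sq_le[OF add add_char_norm_eq_1[OF add False] e
          polar_QA2_mult_add_left polar_QA2_mult_smult_left linform_add subspace_polys_below
          finite_polys_below bij_betw_add_monics])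
  also have "\<dots> \<le> q ^ N * q ^ K"
    using card_radical_QA2_mult_le[of g c m N, OF assms(1-3)]
    by (intro mult_mono) (simp_all add: q_def K_def card_monics flip: of_nat_power)
  also have "\<dots> = q powr (real N + real K)"
    by (simp add: q_def powr_add powr_realpow)
  also have "\<dots> = (q powr ((real N + real K) / 2)) ^ 2"
    by (simp add: power2_eq_square flip: powr_add)
  finally show ?thesis
    unfolding QA_def q_def K_def by (rule power2_le_imp_le) simp
qed

theorem lemma7p1:
  fixes c :: "nat \<Rightarrow> 'a::{finite,field}" and m :: nat
  assumes q_odd: "odd CARD('a)"
    and cm: "c m \<noteq> 0"
  shows "(\<forall>k N (g::'a poly). g \<in> monics k \<longrightarrow>
            polar_rank (\<lambda>h. QA2 c m (g * h)) (Vsp N) \<ge> nat (max 0 (int N - int k - int m + 1)))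
       \<and> (\<exists>C::real. \<forall>k N (g::'a poly) (L::nat \<Rightarrow> 'a) (\<psi>::'a \<Rightarrow> complex).
            g \<in> monics k \<longrightarrow> nontriv_add_char \<psi> \<longrightarrow>
            norm (\<Sum>h\<in>monics N. \<psi> (QA c m L (k + N) (g * h)))
              \<le> C * real CARD('a) powr (real N - real_of_int (max 0 (int N - int k - int m)) / 2))"
proof -
  have two: "(2::'a) \<noteq> 0"
    using two_neq_zero_if_odd_card[OF q_odd] .
  have exponent: "real N - real_of_int (max 0 (int N - int k - int m)) / 2
      = (real N + real (min N (k + m))) / 2" for N k
    by (simp add: min_def)
  show ?thesis
  proof (intro conjI allI impI exI[of _ 1])
    fix k N and g :: "'a poly"
    assume "g \<in> monics k"
    then have "g \<noteq> 0" "degree g = k"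
      by (auto simp: monics_def)
    then show "nat (max 0 (int N - int k - int m + 1)) \<le> polar_rank (\<lambda>h. QA2 c m (g * h)) (Vsp N)"
      using polar_rank_QA2_mult_ge[where c = c and m = m and N = N, OF \<open>g \<noteq> 0\<close> cm two] by simp
  next
    fix k N L and g :: "'a poly" and \<psi> :: "'a \<Rightarrow> complex"
    assume "g \<in> monics k" and \<psi>: "nontriv_add_char \<psi>"
    then have "g \<noteq> 0" "degree g = k"
      by (auto simp: monics_def)
    then show "norm (\<Sum>h\<in>monics N. \<psi> (QA c m L (k + N) (g * h)))
        \<le> 1 * real CARD('a) powr (real N - real_of_int (max 0 (int N - int k - int m)) / 2)"
      using norm_sum_monics_QA_le[where c = c and m = m and N = N and n = "k + N" and L = L, OF \<open>g \<noteq> 0\<close> cm two \<psi>]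
      by (simp add: exponent)
  qed
qed

end
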